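(* Let $n\geq 3$, $d\geq 2$, $\ell\in\mathbb{R}_{>0}^n$, and let $P=(\mathbf{v}_1,\ldots,\mathbf{v}_{n-1})\in V_d(\ell)$ with $2\leq\dim(P)<n-1$. Set $\mathbf{v}_0=\mathbf{v}_n=\mathbf{0}$. For each $i=1,\ldots,n-1$, let $L_i$ denote the line through $\mathbf{v}_{i-1}$ and $\mathbf{v}_{i+1}$, and let $U_i$ denote the linear span of $\{\mathbf{v}_j\}_{j\neq i,\,1\leq j\leq n-1}$. Then there exists $i\in\{1,\ldots,n-1\}$ such that $\mathbf{v}_i\in U_i\setminus L_i$.
   Context: $V_d(\ell)=\{(\mathbf{v}_1,\ldots,\mathbf{v}_{n-1})\in(\mathbb{R}^d)^{n-1} : \|\mathbf{v}_i-\mathbf{v}_{i-1}\|=l_i,\ i=1,\ldots,n\}$ with $\mathbf{v}_0=\mathbf{v}_n=\mathbf{0}$. $\dim(P)$ is the dimension of the linear span of $\{\mathbf{v}_1,\ldots,\mathbf{v}_{n-1}\}$. *)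

theory Defs
  imports "HOL-Analysis.Analysis"
begin

text \<open>The configuration P = (v 1, ..., v (n-1)) is the restriction of v to {1..<n};
  values of v outside {0..n} are irrelevant.\<close>
definition in_polygon_space :: "nat \<Rightarrow> (nat \<Rightarrow> real) \<Rightarrow> (nat \<Rightarrow> 'a::euclidean_space) \<Rightarrow> bool" where
  "in_polygon_space n l v \<longleftrightarrow> v 0 = 0 \<and> v n = 0 \<and>
     (\<forall>i\<in>{1..n}. norm (v i - v (i - 1)) = l i)"

definition poly_dim :: "nat \<Rightarrow> (nat \<Rightarrow> 'a::euclidean_space) \<Rightarrow> nat" where
  "poly_dim n v = dim (span (v ` {1..<n}))"

end

theory Submission
  imports Defs
begin

text \<open>Call vertex i redundant if v i lies in U i. As dim P < n - 1, the vertices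
  v 1, ..., v (n-1) are linearly dependent, so some vertex is redundant; take a maximal
  run p < j < q of redundant vertices around it, with 0 \<le> p and q \<le> n. If each
  redundant v j lay on L j, then, consecutive vertices being distinct, v p, ..., v q
  would all lie on the line through v p and v (p+1). For q < n this puts v q in the
  span of v p and v (p+1), so v q is redundant, contradicting maximality. For q = n the
  line passes through v n = 0 and v (n-1) \<noteq> 0, so it is the span of v (n-1):
  if p = 0 this gives dim P \<le> 1, and otherwise it makes v p redundant.\<close>

lemma affine_hull_2_eq_of_mem:
  fixes a b c d :: "'a::real_vector"
  assumes "a \<noteq> b" "a \<in> affine hull {c, d}" "b \<in> affine hull {c, d}"
  shows "affine hull {a, b} = affine hull {c, d}"
proof
  show "affine hull {a, b} \<subseteq> affine hull {c, d}"
    using assms by (simp add: hull_minimal)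
  have "collinear (affine hull {c, d})"
    by (simp add: collinear_affine_hull_collinear collinear_2)
  then have "collinear {a, b, x}" if "x \<in> affine hull {c, d}" for x
    using assms that by (auto intro: collinear_subset)
  then show "affine hull {c, d} \<subseteq> affine hull {a, b}"
    using collinear_3_affine_hull [OF assms(1)] by blast
qed

lemma affine_hull_2_subset_span_of_mem:
  fixes c d w :: "'a::real_vector"
  assumes "0 \<in> affine hull {c, d}" "w \<in> affine hull {c, d}" "w \<noteq> 0"
  shows "affine hull {c, d} \<subseteq> span {w}"
proof -
  have "affine hull {c, d} = affine hull {0, w}"
    using affine_hull_2_eq_of_mem [of 0 w c d] assms by auto
  also have "\<dots> \<subseteq> span {0, w}"
    by (rule affine_hull_subset_span)
  finally show ?thesis
    by (simp add: span_insert_0)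
qed

lemma mem_affine_of_collinear_walk:
  fixes w :: "nat \<Rightarrow> 'a::real_vector"
  assumes "affine A" "w p \<in> A" "w (Suc p) \<in> A"
    and walk: "\<And>j. p < j \<Longrightarrow> j < q \<Longrightarrow>
                 w (j - 1) \<noteq> w j \<and> w j \<in> affine hull {w (j - 1), w (j + 1)}"
    and "p \<le> k" "k \<le> q"
  shows "w k \<in> A"
  using \<open>p \<le> k\<close> \<open>k \<le> q\<close>
proof (induction k rule: less_induct)
  case (less k)
  show ?case
  proof (cases "k \<le> Suc p")
    case True
    then have "k = p \<or> k = Suc p" using less.prems by linarith
    then show ?thesis using assms(2,3) by blast
  next
    case False
    define m where "m = k - 1"
    have m: "p < m" "m < q" "k = m + 1" using False less.prems unfolding m_def by auto
    have "affine hull {w (m - 1), w m} = affine hull {w (m - 1), w (m + 1)}"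
      using walk [OF m(1,2)] by (intro affine_hull_2_eq_of_mem) (auto intro: hull_inc)
    moreover have "affine hull {w (m - 1), w m} \<subseteq> A"
      using less.IH m assms(1) by (intro hull_minimal) auto
    ultimately show ?thesis using m(3) by (auto intro: hull_inc)
  qed
qed

lemma exists_mem_span_others:
  fixes v :: "'i \<Rightarrow> 'a::real_vector"
  assumes "finite I" "dim (span (v ` I)) < card I"
  shows "\<exists>i\<in>I. v i \<in> span (v ` (I - {i}))"
proof (rule ccontr)
  assume none: "\<not> ?thesis"
  have "inj_on v I"
  proof (rule inj_onI, rule ccontr)
    fix i j assume "i \<in> I" "j \<in> I" "v i = v j" "i \<noteq> j"
    then have "v i \<in> span (v ` (I - {i}))" by (auto intro: span_base)
    then show False using none \<open>i \<in> I\<close> by blast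
  qed
  then have "v ` I - {v i} = v ` (I - {i})" if "i \<in> I" for i
    using that by (auto simp: inj_on_def)
  then have "independent (v ` I)"
    using none unfolding dependent_def by auto
  then have "dim (span (v ` I)) = card I"
    using \<open>inj_on v I\<close> dim_span_eq_card_independent card_image by metis
  then show False using assms(2) by simp
qed

lemma maximal_run:
  fixes P :: "nat \<Rightarrow> bool"
  assumes "P i" "lo < i" "i < hi"
  obtains p q where "lo \<le> p" "p < i" "i < q" "q \<le> hi"
    "p = lo \<or> \<not> P p" "q = hi \<or> \<not> P q" "\<And>j. p < j \<Longrightarrow> j < q \<Longrightarrow> P j"
proof -
  define L where "L = {m. lo \<le> m \<and> m < i \<and> (m = lo \<or> \<not> P m)}"
  define R where "R = {m. i < m \<and> m \<le> hi \<and> (m = hi \<or> \<not> P m)}"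
  have fin: "finite L" "finite R" and ends: "lo \<in> L" "hi \<in> R"
    using assms unfolding L_def R_def by auto
  have p: "Max L \<in> L" and q: "Min R \<in> R"
    using fin ends by (auto intro: Max_in Min_in)
  have "P j" if "Max L < j" "j < Min R" for j
  proof (rule ccontr)
    assume "\<not> P j"
    have "lo \<le> j" "j \<le> hi" using p q that unfolding L_def R_def by auto
    then have "j \<in> L \<or> j = i \<or> j \<in> R"
      using \<open>\<not> P j\<close> unfolding L_def R_def by auto
    then show False
      using that fin \<open>\<not> P j\<close> assms(1) by (metis Max_ge Min_le leD)
  qed
  moreover have "lo \<le> Max L" "Max L < i" "Max L = lo \<or> \<not> P (Max L)"
    using p unfolding L_def by auto
  moreover have "i < Min R" "Min R \<le> hi" "Min R = hi \<or> \<not> P (Min R)"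
    using q unfolding R_def by auto
  ultimately show thesis by (intro that) blast+
qed

lemma in_polygon_space_vertex_neq_prev:
  assumes "in_polygon_space n l v" "\<forall>i\<in>{1..n}. l i > 0" "i \<in> {1..n}"
  shows "v i \<noteq> v (i - 1)"
  using assms unfolding in_polygon_space_def by force

lemma in_polygon_space_run_on_line:
  assumes "in_polygon_space n l v" "\<forall>i\<in>{1..n}. l i > 0" "q \<le> n"
    and on_line: "\<And>j. p < j \<Longrightarrow> j < q \<Longrightarrow> v j \<in> affine hull {v (j - 1), v (j + 1)}"
    and "p \<le> k" "k \<le> q"
  shows "v k \<in> affine hull {v p, v (Suc p)}"
proof (rule mem_affine_of_collinear_walk [OF _ _ _ _ \<open>p \<le> k\<close> \<open>k \<le> q\<close>])
  fix j assume "p < j" "j < q"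
  then show "v (j - 1) \<noteq> v j \<and> v j \<in> affine hull {v (j - 1), v (j + 1)}"
    using on_line in_polygon_space_vertex_neq_prev [OF assms(1,2), of j] \<open>q \<le> n\<close> by auto
qed (auto simp: hull_inc)

lemma mem_span_other_vertices:
  fixes v :: "nat \<Rightarrow> 'a::real_vector"
  assumes "v 0 = 0" "v i \<in> span (v ` J)" "\<And>j. j \<in> J \<Longrightarrow> j < n \<and> j \<noteq> i"
  shows "v i \<in> span (v ` ({1..<n} - {i}))"
proof -
  have "v ` J \<subseteq> span (v ` ({1..<n} - {i}))"
  proof (rule image_subsetI)
    fix j assume "j \<in> J"
    then show "v j \<in> span (v ` ({1..<n} - {i}))"
      using assms(1,3) by (cases "j = 0") (auto intro: span_base span_zero)
  qed
  then show ?thesis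
    using assms(2) span_minimal [OF _ subspace_span] by blast
qed

theorem lemma3p2:
  fixes n :: nat and l :: "nat \<Rightarrow> real" and v :: "nat \<Rightarrow> 'a::euclidean_space"
  assumes "n \<ge> 3"
    and "DIM('a) \<ge> 2"
    and "\<forall>i\<in>{1..n}. l i > 0"
    and "in_polygon_space n l v"
    and "2 \<le> poly_dim n v" and "poly_dim n v < n - 1"
  shows "\<exists>i\<in>{1..<n}. v i \<in> span (v ` ({1..<n} - {i})) \<and>
                        v i \<notin> affine hull {v (i - 1), v (i + 1)}"
proof (rule ccontr)
  assume no_vertex: "\<not> ?thesis"
  define S where "S i \<longleftrightarrow> v i \<in> span (v ` ({1..<n} - {i}))" for i
  have v0: "v 0 = 0" and vn: "v n = 0"
    using assms(4) unfolding in_polygon_space_def by auto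
  have "\<exists>i\<in>{1..<n}. S i"
    using exists_mem_span_others [of "{1..<n}" v] assms(6) unfolding poly_dim_def S_def by simp
  then obtain i0 where "S i0" "0 < i0" "i0 < n" by auto
  then obtain p q where run: "p < i0" "i0 < q" "q \<le> n" "p = 0 \<or> \<not> S p" "q = n \<or> \<not> S q"
      and run_S: "\<And>j. p < j \<Longrightarrow> j < q \<Longrightarrow> S j"
    by (rule maximal_run) blast
  define A where "A = affine hull {v p, v (Suc p)}"
  have in_A: "v j \<in> A" if "p \<le> j" "j \<le> q" for j
    unfolding A_def using no_vertex run_S run unfolding S_def
    by (intro in_polygon_space_run_on_line [OF assms(4,3) \<open>q \<le> n\<close> _ that]) auto
  show False
  proof (cases "q < n")
    case True
    have "v q \<in> span (v ` {p, Suc p})"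
      using in_A [of q] run affine_hull_subset_span unfolding A_def by auto
    then have "S q"
      unfolding S_def using run(1,2) True
      by (intro mem_span_other_vertices [where v = v and J = "{p, Suc p}", OF v0]) auto
    with True run show False by simp
  next
    case False
    then have "q = n"
      using run(3) by simp
    have "v n \<noteq> v (n - 1)"
      using in_polygon_space_vertex_neq_prev [OF assms(4,3), of n] assms(1) by auto
    then have A_span: "A \<subseteq> span {v (n - 1)}"
      using in_A [of n] in_A [of "n - 1"] run(1,2) \<open>q = n\<close> vn unfolding A_def
      by (intro affine_hull_2_subset_span_of_mem) auto
    show False
    proof (cases "p = 0")
      case True
      have "span (v ` {1..<n}) \<subseteq> span {v (n - 1)}"
        using in_A A_span \<open>q = n\<close> True by (intro span_minimal) auto
      then have "poly_dim n v \<le> card {v (n - 1)}"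
        unfolding poly_dim_def by (intro dim_le_card) auto
      with assms(5) show False by simp
    next
      case False
      have "S p"
        unfolding S_def using in_A [of p] A_span run
        by (intro mem_span_other_vertices [where v = v and J = "{n - 1}", OF v0]) auto
      with False run show False by simp
    qed
  qed
qed

end
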